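(* Let $\mathcal F$ be a nonempty hereditary family of finite subsets of $\mathbb N$. Then there is an infinite set $M\subset\mathbb N$ such that one of the following holds: (a) there is $d\in\mathbb N\cup\{0\}$ such that $\mathcal F\cap\mathcal P(M)=[M]^{\le d}$; (b) there is a strictly increasing map $f\colon M\to\mathbb N$ such that $\{F\subset M: F\text{ finite nonempty},\ \#F\le f(\min F)\}\subset\mathcal F$.
   Context: A family $\mathcal F$ of sets is hereditary if $B\in\mathcal F$ whenever $B\subset A$ and $A\in\mathcal F$. $\mathcal P(M)$ is the power set of $M$ and $[M]^{\le d}$ is the family of all subsets of $M$ of cardinality at most $d$. *)

theory Defs
  imports Main
begin

definition hereditary :: "'a set set \<Rightarrow> bool" where
  "hereditary \<F> \<longleftrightarrow> (\<forall>A \<in> \<F>. \<forall>B. B \<subseteq> A \<longrightarrow> B \<in> \<F>)"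

definition subsets_upto :: "'a set \<Rightarrow> nat \<Rightarrow> 'a set set" where
  "subsets_upto M d = {A. A \<subseteq> M \<and> finite A \<and> card A \<le> d}"

end

theory Submission
  imports Defs "HOL-Library.Ramsey"
begin

text \<open>Call \<F> k-dense (dense_nsets \<F> k) if every infinite set contains an infinite Y with [Y]^k \<subseteq> \<F>.
  If \<F> is k-dense for every k, a diagonal argument over nested witnesses for k = 1, 2, \<dots>
  gives an increasing sequence m with [{m k, m (k+1), \<dots>}]^(k+1) \<subseteq> \<F>, and f (m k) = k + 1
  works. Otherwise let d + 1 be the least k for which \<F> is not k-dense (\<F> is 0-dense as
  {} \<in> \<F>). Inside a witness Z of non-density, refine to an infinite set all of whose j-sets,
  j \<le> d, lie in \<F>, and apply Ramsey's theorem to the (d+1)-sets: no infinite subset of Z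
  has all its (d+1)-sets in \<F>, so some infinite M has none of them in \<F>, and by heredity
  \<F> \<inter> Pow M = [M]^{\<le> d}.\<close>

definition dense_nsets :: "'a set set \<Rightarrow> nat \<Rightarrow> bool" where
  "dense_nsets \<A> k \<longleftrightarrow> (\<forall>Z. infinite Z \<longrightarrow> (\<exists>Y\<subseteq>Z. infinite Y \<and> [Y]\<^bsup>k\<^esup> \<subseteq> \<A>))"

lemma dense_nsets_0: "{} \<in> \<A> \<Longrightarrow> dense_nsets \<A> 0"
  unfolding dense_nsets_def by auto

lemma nsets_subset_trans: "[Y]\<^bsup>k\<^esup> \<subseteq> \<A> \<Longrightarrow> W \<subseteq> Y \<Longrightarrow> [W]\<^bsup>k\<^esup> \<subseteq> \<A>"
  by (meson nsets_mono order_trans)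

lemma Ramsey_nsets_in_or_disjoint:
  assumes "infinite Z"
  obtains Y where "Y \<subseteq> Z" "infinite Y" "[Y]\<^bsup>k\<^esup> \<subseteq> \<A> \<or> [Y]\<^bsup>k\<^esup> \<inter> \<A> = {}"
proof -
  let ?colour = "\<lambda>X. if X \<in> \<A> then 0 else 1 :: nat"
  have "?colour ` [Z]\<^bsup>k\<^esup> \<subseteq> {..<2}"
    by auto
  then obtain Y t where Y: "Y \<subseteq> Z" "infinite Y" and "t < 2"
    and t: "?colour ` [Y]\<^bsup>k\<^esup> \<subseteq> {t}"
    by (rule Ramsey_nsets[OF assms])
  have "[Y]\<^bsup>k\<^esup> \<subseteq> \<A> \<or> [Y]\<^bsup>k\<^esup> \<inter> \<A> = {}"
    using t by (auto simp: image_subset_iff split: if_splits)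
  with Y show thesis by (rule that)
qed

lemma infinite_subset_forall_less:
  fixes P :: "nat \<Rightarrow> 'a set \<Rightarrow> bool"
  assumes refine: "\<And>j Z. j < n \<Longrightarrow> infinite Z \<Longrightarrow> \<exists>Y\<subseteq>Z. infinite Y \<and> P j Y"
    and mono: "\<And>j Y W. P j Y \<Longrightarrow> W \<subseteq> Y \<Longrightarrow> P j W"
    and "infinite Z"
  shows "\<exists>Y\<subseteq>Z. infinite Y \<and> (\<forall>j<n. P j Y)"
  using refine
proof (induction n)
  case 0
  then show ?case using \<open>infinite Z\<close> by blast
next
  case (Suc n)
  then obtain Y where "Y \<subseteq> Z" "infinite Y" "\<forall>j<n. P j Y" by auto
  moreover obtain W where "W \<subseteq> Y" "infinite W" "P n W"
    using Suc.prems \<open>infinite Y\<close> by blast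
  moreover have "P j W" if "j < Suc n" for j
  proof (cases "j = n")
    case True
    with \<open>P n W\<close> show ?thesis by simp
  next
    case False
    with that \<open>\<forall>j<n. P j Y\<close> have "P j Y" by simp
    from this \<open>W \<subseteq> Y\<close> show ?thesis by (rule mono)
  qed
  ultimately show ?case
    by (meson order_trans)
qed

lemma strict_mono_diagonal_sequence:
  fixes P :: "nat \<Rightarrow> nat set \<Rightarrow> bool"
  assumes refine: "\<And>k Z. infinite Z \<Longrightarrow> \<exists>Y\<subseteq>Z. infinite Y \<and> P k Y"
    and mono: "\<And>k Y W. P k Y \<Longrightarrow> W \<subseteq> Y \<Longrightarrow> P k W"
  shows "\<exists>m. strict_mono m \<and> (\<forall>k. P k (m ` {k..}))"
proof -
  have "\<exists>Y. \<forall>k. (infinite (Y k) \<and> P k (Y k)) \<and> Y (Suc k) \<subseteq> Y k - {LEAST x. x \<in> Y k}"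
  proof (rule dependent_nat_choice)
    show "\<exists>Y. infinite Y \<and> P 0 Y"
      using refine[of UNIV 0] by auto
  next
    fix Y k assume "infinite Y \<and> P k Y"
    then have "infinite (Y - {LEAST x. x \<in> Y})" by simp
    then show "\<exists>W. (infinite W \<and> P (Suc k) W) \<and> W \<subseteq> Y - {LEAST x. x \<in> Y}"
      using refine by blast
  qed
  then obtain Y where inf: "\<And>k. infinite (Y k)" and P: "\<And>k. P k (Y k)"
    and shrink: "\<And>k. Y (Suc k) \<subseteq> Y k - {LEAST x. x \<in> Y k}"
    by blast
  define m where "m k = (LEAST x. x \<in> Y k)" for k
  have m_in: "m k \<in> Y k" for k
    unfolding m_def using inf[of k] by (metis LeastI finite.emptyI ex_in_conv)
  have m_le: "x \<in> Y k \<Longrightarrow> m k \<le> x" for x k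
    unfolding m_def by (rule Least_le)
  have antimono: "Y k \<subseteq> Y j" if "j \<le> k" for j k
    using that by (induction k rule: dec_induct) (use shrink in blast)+
  have "m k < m (Suc k)" for k
  proof -
    have "m (Suc k) \<in> Y k - {m k}"
      using m_in[of "Suc k"] shrink[of k] unfolding m_def by blast
    then show ?thesis
      using m_le[of "m (Suc k)" k] by auto
  qed
  then have "strict_mono m"
    by (simp add: strict_mono_Suc_iff)
  moreover have "P k (m ` {k..})" for k
  proof -
    have "m ` {k..} \<subseteq> Y k"
      using antimono m_in by auto
    with P show ?thesis by (rule mono)
  qed
  ultimately show ?thesis
    by blast
qed

lemma subsets_bounded_by_min_in_family:
  fixes \<A> :: "nat set set"
  assumes "strict_mono m" and large: "\<And>k. [m ` {k..}]\<^bsup>Suc k\<^esup> \<subseteq> \<A>"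
  shows "\<exists>f. strict_mono_on (range m) f \<and> (\<forall>x\<in>range m. f x \<ge> 1) \<and>
           {F. F \<subseteq> range m \<and> finite F \<and> F \<noteq> {} \<and> card F \<le> f (Min F)} \<subseteq> \<A>"
proof (intro exI conjI)
  define f where "f x = Suc (inv m x)" for x
  have f_m: "f (m k) = Suc k" for k
    unfolding f_def using strict_mono_imp_inj_on[OF \<open>strict_mono m\<close>] by simp
  show "strict_mono_on (range m) f"
    using f_m \<open>strict_mono m\<close> by (auto simp: strict_mono_on_def strict_mono_less)
  show "\<forall>x\<in>range m. f x \<ge> 1"
    using f_m by auto
  show "{F. F \<subseteq> range m \<and> finite F \<and> F \<noteq> {} \<and> card F \<le> f (Min F)} \<subseteq> \<A>"
  proof
    fix F assume "F \<in> {F. F \<subseteq> range m \<and> finite F \<and> F \<noteq> {} \<and> card F \<le> f (Min F)}"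
    then have F: "F \<subseteq> range m" "finite F" "F \<noteq> {}" "card F \<le> f (Min F)" by auto
    obtain k where k: "Min F = m k"
      using F Min_in by blast
    have "F \<subseteq> m ` {k..}"
    proof
      fix x assume "x \<in> F"
      with F obtain j where "x = m j" by blast
      with \<open>x \<in> F\<close> F(2) k have "m k \<le> m j" by (metis Min_le)
      with \<open>strict_mono m\<close> \<open>x = m j\<close> show "x \<in> m ` {k..}"
        by (simp add: strict_mono_less_eq)
    qed
    obtain j where j: "card F = Suc j"
      using F(2,3) by (metis card_0_eq not0_implies_Suc)
    with F(4) k f_m have "j \<le> k" by simp
    with \<open>F \<subseteq> m ` {k..}\<close> have "F \<in> [m ` {j..}]\<^bsup>Suc j\<^esup>"
      using F(2) j by (auto simp: nsets_def)
    then show "F \<in> \<A>"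
      using large by blast
  qed
qed

lemma hereditary_Int_Pow_eq_subsets_upto:
  assumes "hereditary \<A>" and "\<forall>A\<in>\<A>. finite A"
    and small: "\<And>j. j \<le> d \<Longrightarrow> [W]\<^bsup>j\<^esup> \<subseteq> \<A>"
    and large: "[W]\<^bsup>Suc d\<^esup> \<inter> \<A> = {}"
  shows "\<A> \<inter> Pow W = subsets_upto W d"
proof
  show "\<A> \<inter> Pow W \<subseteq> subsets_upto W d"
  proof
    fix A assume A: "A \<in> \<A> \<inter> Pow W"
    with assms(2) have "finite A" by blast
    have "card A \<le> d"
    proof (rule ccontr)
      assume "\<not> card A \<le> d"
      then obtain B where "B \<subseteq> A" "card B = Suc d"
        by (meson not_less_eq_eq obtain_subset_with_card_n)
      moreover from this have "B \<in> \<A>"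
        using A \<open>hereditary \<A>\<close> unfolding hereditary_def by blast
      ultimately show False
        using large A \<open>finite A\<close> by (auto simp: nsets_def dest: finite_subset)
    qed
    with A \<open>finite A\<close> show "A \<in> subsets_upto W d"
      unfolding subsets_upto_def by blast
  qed
  show "subsets_upto W d \<subseteq> \<A> \<inter> Pow W"
    using small unfolding subsets_upto_def nsets_def by blast
qed

lemma all_dense_nsets_imp_min_bounded_subsets:
  fixes \<A> :: "nat set set"
  assumes "\<forall>k. dense_nsets \<A> k"
  shows "\<exists>M. infinite M \<and> (\<exists>f. strict_mono_on M f \<and> (\<forall>x\<in>M. f x \<ge> 1) \<and>
           {F. F \<subseteq> M \<and> finite F \<and> F \<noteq> {} \<and> card F \<le> f (Min F)} \<subseteq> \<A>)"
proof -
  have "\<exists>m. strict_mono m \<and> (\<forall>k. [m ` {k..}]\<^bsup>Suc k\<^esup> \<subseteq> \<A>)"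
    by (rule strict_mono_diagonal_sequence[of "\<lambda>k Y. [Y]\<^bsup>Suc k\<^esup> \<subseteq> \<A>"])
      (use assms in \<open>simp add: dense_nsets_def\<close>, fact nsets_subset_trans)
  then obtain m where m: "strict_mono m" "\<And>k. [m ` {k..}]\<^bsup>Suc k\<^esup> \<subseteq> \<A>"
    by blast
  then have "infinite (range m)"
    by (simp add: strict_mono_imp_inj_on range_inj_infinite)
  with subsets_bounded_by_min_in_family[OF m] show ?thesis
    by blast
qed

lemma least_non_dense_nsets_imp_Int_Pow_eq_subsets_upto:
  assumes "hereditary \<A>" and "\<forall>A\<in>\<A>. finite A"
    and dense: "\<forall>j\<le>d. dense_nsets \<A> j" and not_dense: "\<not> dense_nsets \<A> (Suc d)"
  shows "\<exists>M. infinite M \<and> \<A> \<inter> Pow M = subsets_upto M d"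
proof -
  obtain Z where "infinite Z" and Z: "\<not> (\<exists>Y\<subseteq>Z. infinite Y \<and> [Y]\<^bsup>Suc d\<^esup> \<subseteq> \<A>)"
    using not_dense unfolding dense_nsets_def by blast
  have "\<exists>Y\<subseteq>Z. infinite Y \<and> (\<forall>j<Suc d. [Y]\<^bsup>j\<^esup> \<subseteq> \<A>)"
    using dense \<open>infinite Z\<close> unfolding dense_nsets_def
    by (intro infinite_subset_forall_less[OF _ nsets_subset_trans]) auto
  then obtain Y where "Y \<subseteq> Z" "infinite Y" and Y: "\<forall>j<Suc d. [Y]\<^bsup>j\<^esup> \<subseteq> \<A>"
    by blast
  obtain W where "W \<subseteq> Y" "infinite W"
    and "[W]\<^bsup>Suc d\<^esup> \<subseteq> \<A> \<or> [W]\<^bsup>Suc d\<^esup> \<inter> \<A> = {}"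
    using Ramsey_nsets_in_or_disjoint[OF \<open>infinite Y\<close>] by blast
  with Z \<open>Y \<subseteq> Z\<close> have "[W]\<^bsup>Suc d\<^esup> \<inter> \<A> = {}"
    by blast
  moreover have "[W]\<^bsup>j\<^esup> \<subseteq> \<A>" if "j \<le> d" for j
  proof (rule nsets_subset_trans)
    show "[Y]\<^bsup>j\<^esup> \<subseteq> \<A>"
      using Y that by simp
  qed (fact \<open>W \<subseteq> Y\<close>)
  ultimately have "\<A> \<inter> Pow W = subsets_upto W d"
    by (intro hereditary_Int_Pow_eq_subsets_upto[OF assms(1,2)])
  with \<open>infinite W\<close> show ?thesis
    by blast
qed

theorem lemma4p8:
  fixes \<F> :: "nat set set"
  assumes "\<F> \<noteq> {}"
    and "\<forall>A \<in> \<F>. finite A"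
    and "hereditary \<F>"
  shows "\<exists>M. infinite M \<and>
           ((\<exists>d::nat. \<F> \<inter> Pow M = subsets_upto M d) \<or>
            (\<exists>f::nat \<Rightarrow> nat. strict_mono_on M f \<and> (\<forall>x\<in>M. f x \<ge> 1) \<and>
               {F. F \<subseteq> M \<and> finite F \<and> F \<noteq> {} \<and> card F \<le> f (Min F)} \<subseteq> \<F>))"
proof (cases "\<forall>k. dense_nsets \<F> k")
  case True
  then show ?thesis
    using all_dense_nsets_imp_min_bounded_subsets by meson
next
  case False
  then obtain k where "\<not> dense_nsets \<F> k" and below: "\<forall>j<k. dense_nsets \<F> j"
    using exists_least_iff[of "\<lambda>k. \<not> dense_nsets \<F> k"] by blast
  moreover have "{} \<in> \<F>"
    using assms(1,3) unfolding hereditary_def by blast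
  ultimately obtain d where "k = Suc d"
    using dense_nsets_0 by (cases k) auto
  with below \<open>\<not> dense_nsets \<F> k\<close> have "\<exists>M. infinite M \<and> \<F> \<inter> Pow M = subsets_upto M d"
    by (intro least_non_dense_nsets_imp_Int_Pow_eq_subsets_upto[OF assms(3,2)]) auto
  then show ?thesis
    by meson
qed

end
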